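(* Let $\mathbb{E}$ be a countable subset of $\mathbb{R}$ with $0\in\mathbb{E}$, and let $\mathcal{V}$ be a closed $\mathbb{E}$-vine over a Polish space $X$. If $\mathcal{V}$ is well founded, then $o(\mathcal{V})<\omega_1$.
   Context: For finite $G\subset\mathbb{N}$, $[\mathbb{E},G]=\{f:\mathbb{N}\to\mathbb{E}:\mathrm{supp}(f)\subset G\}$. An $\mathbb{E}$-bunch over $X$ is an element $(x_f)_{f\in[\mathbb{E},G]}\in X^{[\mathbb{E},G]}$, $G$ finite. For $\chi=(x_f)_{f\in[\mathbb{E},F]}$, $\psi=(y_f)_{f\in[\mathbb{E},G]}$, $\chi\preceq\psi$ means $F$ is an initial segment of $G$ and $y_f=x_f$ for $f\in[\mathbb{E},F]$. An $\mathbb{E}$-vine is a set $\mathcal{V}$ of $\mathbb{E}$-bunches closed under $\preceq$-predecessors; it is well founded if it has no infinite $\preceq$-chain; it is closed if $\mathcal{V}\cap X^{[\mathbb{E},G]}$ is closed in the product topology of $X^{[\mathbb{E},G]}$ for every finite $G$. Derivatives: $\mathcal{V}^{(1)}=\mathcal{V}\setminus\{\chi\in\mathcal{V}:\chi\text{ is }\preceq\text{-maximal}\}$, $\mathcal{V}^{(\alpha+1)}=(\mathcal{V}^{(\alpha)})^{(1)}$, $\mathcal{V}^{(\alpha)}=\bigcap_{\beta<\alpha}\mathcal{V}^{(\beta)}$ for limit $\alpha$; the index is $o(\mathcal{V})=\min\{\alpha:\mathcal{V}^{(\alpha)}=\emptyset\}$. *)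

theory Defs
  imports "HOL-Analysis.Analysis"
begin

definition EG :: "real set \<Rightarrow> nat set \<Rightarrow> (nat \<Rightarrow> real) set" where
  "EG E G = {f. (\<forall>n. f n \<in> E) \<and> {n. f n \<noteq> 0} \<subseteq> G}"

text \<open>A bunch is a pair (G, x) with x an element of X^[E,G], represented as an
  extensional function on [E,G] (the carrier of the product topology).\<close>
type_synonym 'a bunch = "nat set \<times> ((nat \<Rightarrow> real) \<Rightarrow> 'a)"

definition is_bunch :: "real set \<Rightarrow> 'a bunch \<Rightarrow> bool" where
  "is_bunch E c \<longleftrightarrow> finite (fst c) \<and> snd c \<in> extensional (EG E (fst c))"

definition initial_segment :: "nat set \<Rightarrow> nat set \<Rightarrow> bool" where
  "initial_segment F G \<longleftrightarrow> F \<subseteq> G \<and> (\<forall>a\<in>F. \<forall>b\<in>G. b < a \<longrightarrow> b \<in> F)"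

definition bunch_le :: "real set \<Rightarrow> 'a bunch \<Rightarrow> 'a bunch \<Rightarrow> bool" where
  "bunch_le E c p \<longleftrightarrow> initial_segment (fst c) (fst p) \<and>
     (\<forall>f\<in>EG E (fst c). snd p f = snd c f)"

definition is_vine :: "real set \<Rightarrow> 'a bunch set \<Rightarrow> bool" where
  "is_vine E V \<longleftrightarrow> (\<forall>c\<in>V. is_bunch E c) \<and>
     (\<forall>p\<in>V. \<forall>c. is_bunch E c \<and> bunch_le E c p \<longrightarrow> c \<in> V)"

definition vine_well_founded :: "real set \<Rightarrow> 'a bunch set \<Rightarrow> bool" where
  "vine_well_founded E V \<longleftrightarrow>
     \<not> (\<exists>C. C \<subseteq> V \<and> infinite C \<and> (\<forall>c\<in>C. \<forall>p\<in>C. bunch_le E c p \<or> bunch_le E p c))"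

definition vine_closed :: "real set \<Rightarrow> ('a::topological_space) bunch set \<Rightarrow> bool" where
  "vine_closed E V \<longleftrightarrow> (\<forall>G. finite G \<longrightarrow>
     closedin (product_topology (\<lambda>_. euclidean) (EG E G)) {x. (G, x) \<in> V})"

definition vine_deriv :: "real set \<Rightarrow> 'a bunch set \<Rightarrow> 'a bunch set" where
  "vine_deriv E V = V - {c\<in>V. \<not> (\<exists>p\<in>V. bunch_le E c p \<and> p \<noteq> c)}"

text \<open>Ordinals are represented (as in the HOL library) by well-orders. For a
  well-order r, D is the transfinite derivative sequence indexed by Field r:
  the element a of Field r stands for the ordinal = order type of its strict
  initial segment.\<close>
definition immediate_pred :: "'b rel \<Rightarrow> 'b \<Rightarrow> 'b \<Rightarrow> bool" where
  "immediate_pred r b a \<longleftrightarrow> (b, a) \<in> r \<and> b \<noteq> a \<and>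
     (\<forall>c. (b, c) \<in> r \<and> (c, a) \<in> r \<longrightarrow> c = b \<or> c = a)"

definition is_deriv_seq :: "real set \<Rightarrow> 'a bunch set \<Rightarrow> 'b rel \<Rightarrow> ('b \<Rightarrow> 'a bunch set) \<Rightarrow> bool" where
  "is_deriv_seq E V r D \<longleftrightarrow> well_order_on (Field r) r \<and>
     (\<forall>a\<in>Field r.
        (\<forall>b. immediate_pred r b a \<longrightarrow> D a = vine_deriv E (D b)) \<and>
        ((\<nexists>b. immediate_pred r b a) \<longrightarrow>
            D a = V \<inter> \<Inter>{D b | b. (b, a) \<in> r \<and> b \<noteq> a}))"

text \<open>o(V) < omega_1: some countable ordinal alpha has V^(alpha) = {} (then the least one,
  o(V), is countable as well). Countable ordinals = well-orders on subsets of nat.\<close>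
definition index_lt_omega1 :: "real set \<Rightarrow> 'a bunch set \<Rightarrow> bool" where
  "index_lt_omega1 E V \<longleftrightarrow>
     (\<exists>(r::nat rel) D. is_deriv_seq E V r D \<and> (\<exists>a\<in>Field r. D a = {}))"

end

theory Submission
  imports Defs
begin

text \<open>Finite strictly increasing chains of bunches in \<open>V\<close> are coded by finite sequences of
  natural numbers, compatibly with taking prefixes: a chain of length \<open>n\<close> records the supports of
  its bunches and, relative to a countable dense sequence, their first \<open>n\<close> coordinates up to
  \<open>2\<^sup>-\<^sup>n\<close>. An infinite branch of the resulting tree would yield chains whose bunches converge
  coordinatewise (by completeness of \<open>X\<close>); by closedness the limits form an infinite chain in \<open>V\<close>,
  contradicting well-foundedness. Hence the Kleene-Brouwer order of the tree is a countable
  well-order, and the code of a chain is a rank for the derivatives: if the last bunch of a chain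
  survives to the stage \<open>a\<close>, its code is not below \<open>a\<close>. Every one-element chain is coded below
  the root, so the derivative at the root is empty.\<close>

section \<open>The Kleene-Brouwer order\<close>

fun kb_less :: "'a::wellorder list \<Rightarrow> 'a list \<Rightarrow> bool" where
  "kb_less [] _ \<longleftrightarrow> False"
| "kb_less (_ # _) [] \<longleftrightarrow> True"
| "kb_less (x # s) (y # t) \<longleftrightarrow> x < y \<or> x = y \<and> kb_less s t"

lemma kb_less_irrefl: "\<not> kb_less s s"
  by (induction s) auto

lemma kb_less_trans: "kb_less a b \<Longrightarrow> kb_less b c \<Longrightarrow> kb_less a c"
proof (induction a arbitrary: b c)
  case (Cons x a)
  then show ?case by (cases b; cases c) auto
qed simp

lemma kb_less_asym: "kb_less s t \<Longrightarrow> \<not> kb_less t s"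
  using kb_less_irrefl kb_less_trans by blast

lemma kb_less_linear: "s \<noteq> t \<Longrightarrow> kb_less s t \<or> kb_less t s"
proof (induction s arbitrary: t)
  case Nil
  then show ?case by (cases t) auto
next
  case (Cons x s)
  then show ?case by (cases t) (auto simp: neq_iff)
qed

lemma kb_less_append: "u \<noteq> [] \<Longrightarrow> kb_less (s @ u) s"
  by (induction s) (auto simp: neq_Nil_conv)

lemma not_kb_less_append: "\<not> kb_less s (s @ u)"
  by (induction s) auto

lemma kb_less_proper_prefix: "take (length s) t = s \<Longrightarrow> length s < length t \<Longrightarrow> kb_less t s"
  using kb_less_append[of "drop (length s) t" s] by (metis append_take_drop_id drop_eq_Nil not_le)

lemma not_kb_less_prefix: "take (length s) t = s \<Longrightarrow> \<not> kb_less s t"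
  using not_kb_less_append[of s "drop (length s) t"] by (metis append_take_drop_id)

lemma kb_less_append_Cons: "x < y \<Longrightarrow> kb_less (p @ x # s) (p @ y # t)"
  by (induction p) auto

lemma kb_less_at_first_difference:
  assumes "take k s = take k t" "k < length s" "k < length t" "s ! k < t ! k"
  shows "kb_less s t"
proof -
  have "kb_less (take k s @ s ! k # drop (Suc k) s) (take k t @ t ! k # drop (Suc k) t)"
    unfolding assms(1) using assms(4) by (rule kb_less_append_Cons)
  then show ?thesis
    using assms(2,3) by (simp only: id_take_nth_drop[symmetric])
qed

lemma decseq_wellorder_eventually_const:
  fixes e :: "nat \<Rightarrow> 'a::wellorder"
  assumes "decseq e"
  obtains M where "\<And>n. n \<ge> M \<Longrightarrow> e n = e M"
proof -
  have "(LEAST v. v \<in> range e) \<in> range e"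
    by (rule LeastI, rule rangeI)
  then obtain M where M: "e M = (LEAST v. v \<in> range e)"
    by (metis rangeE)
  have "e n = e M" if "n \<ge> M" for n
    using assms that M by (metis Least_le antimonoD antisym rangeI)
  then show ?thesis using that by blast
qed

lemma kb_descending_outgrows_stable_prefix:
  assumes desc: "\<And>n. kb_less (\<sigma> (Suc n)) (\<sigma> n)"
    and N: "\<And>n. n \<ge> N \<Longrightarrow> k \<le> length (\<sigma> n) \<and> take k (\<sigma> n) = take k (\<sigma> N)"
    and "n \<ge> N"
  shows "k < length (\<sigma> (Suc n))"
proof (rule ccontr)
  assume short: "\<not> k < length (\<sigma> (Suc n))"
  have "take k (\<sigma> (Suc n)) = take k (\<sigma> n)" "k \<le> length (\<sigma> (Suc n))"
    using N[of n] N[of "Suc n"] \<open>n \<ge> N\<close> by auto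
  then have "take (length (\<sigma> (Suc n))) (\<sigma> n) = \<sigma> (Suc n)"
    using short by simp
  then show False
    using desc[of n] not_kb_less_prefix by blast
qed

lemma kb_descending_prefixes_stabilise:
  assumes desc: "\<And>n. kb_less (\<sigma> (Suc n)) (\<sigma> n)"
  shows "\<exists>N. \<forall>n\<ge>N. k \<le> length (\<sigma> n) \<and> take k (\<sigma> n) = take k (\<sigma> N)"
proof (induction k)
  case (Suc k)
  \<comment> \<open>Once the first \<open>k\<close> entries are fixed, the sequences stay longer than \<open>k\<close> (a proper prefix is
    larger) and their \<open>k\<close>-th entries decrease, so these stabilise as well.\<close>
  then obtain N where N: "\<And>n. n \<ge> N \<Longrightarrow> k \<le> length (\<sigma> n) \<and> take k (\<sigma> n) = take k (\<sigma> N)"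
    by blast
  have long: "k < length (\<sigma> (Suc n))" if "n \<ge> N" for n
    using desc N that by (rule kb_descending_outgrows_stable_prefix)
  define e where "e n = \<sigma> (Suc (N + n)) ! k" for n
  have "decseq e"
  proof (rule decseq_SucI, rule ccontr)
    fix n
    let ?s = "\<sigma> (Suc (N + n))" and ?t = "\<sigma> (Suc (Suc (N + n)))"
    assume "\<not> e (Suc n) \<le> e n"
    then have "?s ! k < ?t ! k"
      by (simp add: e_def)
    moreover have "take k ?s = take k ?t"
      using N[of "Suc (N + n)"] N[of "Suc (Suc (N + n))"] by simp
    ultimately have "kb_less ?s ?t"
      using long[of "N + n"] long[of "Suc (N + n)"] by (simp add: kb_less_at_first_difference)
    then show False
      using desc kb_less_asym by blast
  qed
  then obtain M where M: "\<And>n. n \<ge> M \<Longrightarrow> e n = e M"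
    using decseq_wellorder_eventually_const by blast
  have "Suc k \<le> length (\<sigma> n) \<and> take (Suc k) (\<sigma> n) = take (Suc k) (\<sigma> (Suc (N + M)))"
    if "n \<ge> Suc (N + M)" for n
  proof -
    define m where "m = n - Suc N"
    have n: "n = Suc (N + m)" "m \<ge> M"
      using that unfolding m_def by simp_all
    have "\<sigma> n ! k = \<sigma> (Suc (N + M)) ! k"
      using M[of m] n by (simp add: e_def)
    moreover have "take k (\<sigma> n) = take k (\<sigma> (Suc (N + M)))"
      using N[of n] N[of "Suc (N + M)"] n by simp
    ultimately show ?thesis
      using long[of "N + m"] long[of "N + M"] n by (simp add: take_Suc_conv_app_nth)
  qed
  then show ?case by blast
qed simp

lemma kb_descending_limit_branch:
  assumes desc: "\<And>n. kb_less (\<sigma> (Suc n)) (\<sigma> n)"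
  obtains f where "\<And>k. \<exists>n. map f [0..<k] = take k (\<sigma> n)"
proof -
  obtain N where N: "\<And>k n. n \<ge> N k \<Longrightarrow> k \<le> length (\<sigma> n) \<and> take k (\<sigma> n) = take k (\<sigma> (N k))"
    using kb_descending_prefixes_stabilise[of \<sigma>] desc by metis
  define f where "f j = \<sigma> (N (Suc j)) ! j" for j
  have "map f [0..<k] = take k (\<sigma> (N k))" for k
  proof (rule nth_equalityI)
    show "length (map f [0..<k]) = length (take k (\<sigma> (N k)))"
      using N[of k "N k"] by simp
    fix j assume "j < length (map f [0..<k])"
    then have j: "j < k" by simp
    define n where "n = max (N k) (N (Suc j))"
    have "\<sigma> n ! j = f j"
      using N[of "Suc j" n] unfolding f_def n_def by (metis lessI max.cobounded2 nth_take)
    moreover have "\<sigma> n ! j = \<sigma> (N k) ! j"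
      using N[of k n] j unfolding n_def by (metis max.cobounded1 nth_take)
    ultimately show "map f [0..<k] ! j = take k (\<sigma> (N k)) ! j"
      using j by simp
  qed
  then show ?thesis
    using that by blast
qed

definition kb_rel :: "'a::wellorder list set \<Rightarrow> 'a list rel" where
  "kb_rel P = {(s, t). s \<in> P \<and> t \<in> P \<and> (s = t \<or> kb_less s t)}"

lemma Field_kb_rel: "Field (kb_rel P) = P"
  unfolding kb_rel_def Field_def by auto

lemma well_order_on_kb_rel:
  assumes prefix_closed: "\<And>s k. s \<in> P \<Longrightarrow> take k s \<in> P"
    and no_branch: "\<And>f. \<exists>k. map f [0..<k] \<notin> P"
  shows "well_order_on P (kb_rel P)"
  unfolding well_order_on_def linear_order_on_def partial_order_on_def preorder_on_def
proof (intro conjI)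
  show "kb_rel P \<subseteq> P \<times> P" "refl_on P (kb_rel P)" "trans (kb_rel P)" "antisym (kb_rel P)"
    "total_on P (kb_rel P)"
    unfolding kb_rel_def refl_on_def trans_def antisym_def total_on_def
    using kb_less_trans kb_less_asym kb_less_linear by blast+
  show "wf (kb_rel P - Id)"
    unfolding wf_iff_no_infinite_down_chain
  proof
    assume "\<exists>\<sigma>. \<forall>n. (\<sigma> (Suc n), \<sigma> n) \<in> kb_rel P - Id"
    then obtain \<sigma> where \<sigma>: "\<And>n. \<sigma> n \<in> P" "\<And>n. kb_less (\<sigma> (Suc n)) (\<sigma> n)"
      unfolding kb_rel_def by auto
    obtain f where "\<And>k. \<exists>n. map f [0..<k] = take k (\<sigma> n)"
      using kb_descending_limit_branch[of \<sigma>] \<sigma>(2) by blast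
    then show False
      using no_branch[of f] prefix_closed \<sigma>(1) by metis
  qed
qed

section \<open>Bunches and chains of bunches\<close>

lemma EG_mono: "F \<subseteq> G \<Longrightarrow> EG E F \<subseteq> EG E G"
  unfolding EG_def by auto

lemma bunch_le_refl: "bunch_le E c c"
  unfolding bunch_le_def initial_segment_def by auto

lemma bunch_le_trans:
  assumes ab: "bunch_le E a b" and bc: "bunch_le E b c"
  shows "bunch_le E a c"
proof -
  have "fst a \<subseteq> fst b"
    using ab unfolding bunch_le_def initial_segment_def by blast
  then have "EG E (fst a) \<subseteq> EG E (fst b)"
    by (rule EG_mono)
  then have "\<forall>f\<in>EG E (fst a). snd c f = snd a f"
    using ab bc unfolding bunch_le_def by auto
  moreover have "initial_segment (fst a) (fst c)"
    using ab bc unfolding bunch_le_def initial_segment_def by blast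
  ultimately show ?thesis
    unfolding bunch_le_def by blast
qed

lemma bunch_eq_if_le_same_support:
  assumes "is_bunch E a" "is_bunch E b" "bunch_le E a b" "fst a = fst b"
  shows "a = b"
proof -
  have "snd a = snd b"
  proof (rule extensionalityI)
    show "snd a \<in> extensional (EG E (fst a))" "snd b \<in> extensional (EG E (fst a))"
      using assms(1,2,4) unfolding is_bunch_def by auto
    show "snd a f = snd b f" if "f \<in> EG E (fst a)" for f
      using assms(3) that unfolding bunch_le_def by simp
  qed
  with assms(4) show ?thesis
    by (simp add: prod_eq_iff)
qed

definition bunch_less :: "real set \<Rightarrow> 'a bunch \<Rightarrow> 'a bunch \<Rightarrow> bool" where
  "bunch_less E c p \<longleftrightarrow> bunch_le E c p \<and> p \<noteq> c"

definition bunch_chain :: "real set \<Rightarrow> 'a bunch set \<Rightarrow> 'a bunch list \<Rightarrow> bool" where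
  "bunch_chain E V s \<longleftrightarrow> set s \<subseteq> V \<and> successively (bunch_less E) s"

lemma bunch_chain_snoc_iff:
  "bunch_chain E V (s @ [p]) \<longleftrightarrow> bunch_chain E V s \<and> p \<in> V \<and> (s = [] \<or> bunch_less E (last s) p)"
  unfolding bunch_chain_def by (auto simp: successively_append_iff)

lemma bunch_chain_nth_mem: "bunch_chain E V s \<Longrightarrow> i < length s \<Longrightarrow> s ! i \<in> V"
  unfolding bunch_chain_def using nth_mem by blast

lemma bunch_chain_take:
  assumes "bunch_chain E V s"
  shows "bunch_chain E V (take k s)"
proof -
  have "successively (bunch_less E) (take k s @ drop k s)"
    using assms unfolding bunch_chain_def by simp
  then show ?thesis
    using assms unfolding bunch_chain_def successively_append_iff by (auto dest: in_set_takeD)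
qed

lemma increasing_sequence_not_vine_well_founded:
  assumes vine: "is_vine E V" and cV: "\<And>i. c i \<in> V"
    and incr: "\<And>i. bunch_less E (c i) (c (Suc i))"
  shows "\<not> vine_well_founded E V"
proof -
  have le: "bunch_le E (c i) (c j)" if "i \<le> j" for i j
    using that
  proof (induction j rule: dec_induct)
    case (step j)
    then show ?case using incr[of j] bunch_le_trans unfolding bunch_less_def by blast
  qed (rule bunch_le_refl)
  have "c i \<noteq> c j" if "i < j" for i j
  proof
    assume "c i = c j"
    then have "bunch_le E (c (Suc i)) (c i)"
      using le[of "Suc i" j] that by simp
    then have "fst (c (Suc i)) = fst (c i)"
      using incr[of i] unfolding bunch_less_def bunch_le_def initial_segment_def by auto
    then have "c i = c (Suc i)"
      using incr[of i] vine cV unfolding bunch_less_def is_vine_def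
      by (metis bunch_eq_if_le_same_support)
    then show False
      using incr[of i] unfolding bunch_less_def by simp
  qed
  then have "inj c"
    by (metis injI linorder_neqE_nat)
  then have "infinite (range c)"
    by (rule range_inj_infinite)
  moreover have "\<forall>a\<in>range c. \<forall>b\<in>range c. bunch_le E a b \<or> bunch_le E b a"
    using le nat_le_linear by blast
  ultimately show ?thesis
    using cV unfolding vine_well_founded_def by blast
qed

section \<open>Derivative sequences\<close>

lemma immediate_pred_greatest:
  assumes wo: "well_order_on (Field r) r" and b': "immediate_pred r b' a"
    and "(b, a) \<in> r" "b \<noteq> a"
  shows "(b, b') \<in> r"
proof (rule ccontr)
  assume "(b, b') \<notin> r"
  moreover have "b \<in> Field r" "b' \<in> Field r"
    using assms unfolding immediate_pred_def Field_def by auto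
  ultimately have "(b', b) \<in> r" "b \<noteq> b'"
    using wo unfolding well_order_on_def linear_order_on_def total_on_def
    by (metis refl_onD partial_order_on_def preorder_on_def)+
  then show False
    using assms unfolding immediate_pred_def by blast
qed

lemma immediate_pred_unique:
  assumes wo: "well_order_on (Field r) r" and "immediate_pred r b a" "immediate_pred r b' a"
  shows "b = b'"
proof -
  have "(b, b') \<in> r" "(b', b) \<in> r"
    using immediate_pred_greatest[OF wo] assms(2,3) unfolding immediate_pred_def by blast+
  then show ?thesis
    using wo unfolding well_order_on_def linear_order_on_def partial_order_on_def antisym_def
    by blast
qed

lemma deriv_seq_exists:
  assumes wo: "well_order_on (Field r) r"
  shows "\<exists>D. is_deriv_seq E V r D"
proof -
  have wf: "wf (r - Id)"
    using wo unfolding well_order_on_def by blast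
  define F where "F D a = (if \<exists>b. immediate_pred r b a
      then vine_deriv E (D (SOME b. immediate_pred r b a))
      else V \<inter> \<Inter>(D ` {b. (b, a) \<in> r - Id}))" for D a
  define D where "D = wfrec (r - Id) F"
  have D: "D a = F (cut D (r - Id) a) a" for a
    unfolding D_def by (rule wfrec[OF wf])
  have "D a = vine_deriv E (D b)" if "immediate_pred r b a" for a b
  proof -
    have "(SOME b. immediate_pred r b a) = b"
      using that immediate_pred_unique[OF wo _ that]
      by (rule some_equality[where P = "\<lambda>b. immediate_pred r b a"])
    then have "D a = vine_deriv E (cut D (r - Id) a b)"
      using that D[of a] unfolding F_def by auto
    moreover have "(b, a) \<in> r - Id"
      using that unfolding immediate_pred_def by auto
    ultimately show ?thesis
      by (simp add: cut_apply)
  qed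
  moreover have "D a = V \<inter> \<Inter>{D b | b. (b, a) \<in> r \<and> b \<noteq> a}" if "\<nexists>b. immediate_pred r b a" for a
  proof -
    have "cut D (r - Id) a ` {b. (b, a) \<in> r - Id} = D ` {b. (b, a) \<in> r - Id}"
      by (rule image_cong) (simp_all add: cut_apply)
    moreover have "{D b | b. (b, a) \<in> r \<and> b \<noteq> a} = D ` {b. (b, a) \<in> r - Id}"
      by blast
    ultimately show ?thesis
      using that D[of a] unfolding F_def by simp
  qed
  ultimately show ?thesis
    using wo unfolding is_deriv_seq_def by (intro exI[of _ D]) blast
qed

lemma vine_deriv_subset: "vine_deriv E S \<subseteq> S"
  unfolding vine_deriv_def by auto

lemma deriv_seq_subset:
  assumes ds: "is_deriv_seq E V r D" and a: "a \<in> Field r"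
  shows "D a \<subseteq> V"
proof -
  have "wf (r - Id)"
    using ds unfolding is_deriv_seq_def well_order_on_def by blast
  then show ?thesis
    using a
  proof (induction a rule: wf_induct_rule)
    case (less a)
    show ?case
    proof (cases "\<exists>b. immediate_pred r b a")
      case True
      then obtain b where b: "immediate_pred r b a"
        by blast
      then have "b \<in> Field r" "(b, a) \<in> r - Id"
        unfolding immediate_pred_def Field_def by auto
      then show ?thesis
        using less b ds vine_deriv_subset unfolding is_deriv_seq_def by blast
    next
      case False
      then show ?thesis
        using ds less.prems unfolding is_deriv_seq_def by blast
    qed
  qed
qed

lemma deriv_seq_antimono:
  assumes ds: "is_deriv_seq E V r D" and ba: "(b, a) \<in> r"
  shows "D a \<subseteq> D b"
proof -
  have wo: "well_order_on (Field r) r"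
    using ds unfolding is_deriv_seq_def by blast
  then have "wf (r - Id)"
    unfolding well_order_on_def by blast
  then show ?thesis
    using ba
  proof (induction a rule: wf_induct_rule)
    case (less a)
    have a: "a \<in> Field r"
      using less.prems unfolding Field_def by blast
    show ?case
    proof (cases "b = a")
      case False
      show ?thesis
      proof (cases "\<exists>b'. immediate_pred r b' a")
        case True
        then obtain b' where b': "immediate_pred r b' a"
          by blast
        have "(b, b') \<in> r"
          using wo b' less.prems \<open>b \<noteq> a\<close> by (rule immediate_pred_greatest)
        moreover have "(b', a) \<in> r - Id"
          using b' unfolding immediate_pred_def by blast
        ultimately have "D b' \<subseteq> D b"
          using less.IH by blast
        moreover have "D a \<subseteq> D b'"
          using ds a b' vine_deriv_subset unfolding is_deriv_seq_def by blast
        ultimately show ?thesis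
          by blast
      next
        case False
        then show ?thesis
          using ds a less.prems \<open>b \<noteq> a\<close> unfolding is_deriv_seq_def by blast
      qed
    qed simp
  qed
qed

lemma deriv_seq_rank_bound:
  assumes ds: "is_deriv_seq E V r D"
    and rank: "\<And>s p. bunch_chain E V (s @ [p]) \<Longrightarrow> (\<phi> (s @ [p]), \<phi> s) \<in> r - Id"
    and a: "a \<in> Field r" and s: "bunch_chain E V s" "s \<noteq> []" "last s \<in> D a"
  shows "(\<phi> s, a) \<notin> r - Id"
proof -
  have "wf (r - Id)"
    using ds unfolding is_deriv_seq_def well_order_on_def by blast
  then show ?thesis
    using a s
  proof (induction a arbitrary: s rule: wf_induct_rule)
    case (less a)
    show ?case
    proof
      assume below: "(\<phi> s, a) \<in> r - Id"
      then have "\<phi> s \<in> Field r"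
        unfolding Field_def by blast
      consider c where "(\<phi> s, c) \<in> r - Id" "(c, a) \<in> r - Id" | "immediate_pred r (\<phi> s) a"
        using below unfolding immediate_pred_def by blast
      then show False
      proof cases
        case (1 c)
        then have "c \<in> Field r" "last s \<in> D c"
          using less.prems(4) deriv_seq_antimono[OF ds] unfolding Field_def by blast+
        then show False
          using less.IH[OF 1(2)] less.prems(2,3) 1(1) by blast
      next
        case 2
        then have "last s \<in> vine_deriv E (D (\<phi> s))"
          using less.prems(1,4) ds unfolding is_deriv_seq_def by blast
        then obtain p where p: "p \<in> D (\<phi> s)" "bunch_less E (last s) p"
          unfolding vine_deriv_def bunch_less_def by blast
        then have chain: "bunch_chain E V (s @ [p])"
          using less.prems(2) deriv_seq_subset[OF ds \<open>\<phi> s \<in> Field r\<close>] by (auto simp: bunch_chain_snoc_iff)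
        then show False
          using less.IH[OF below \<open>\<phi> s \<in> Field r\<close>, of "s @ [p]"] rank[OF chain] p(1) by simp
      qed
    qed
  qed
qed

lemma deriv_seq_vanishes:
  assumes ds: "is_deriv_seq E V r D"
    and rank: "\<And>s p. bunch_chain E V (s @ [p]) \<Longrightarrow> (\<phi> (s @ [p]), \<phi> s) \<in> r - Id"
    and top: "\<phi> [] \<in> Field r"
  shows "D (\<phi> []) = {}"
proof (rule ccontr)
  assume "D (\<phi> []) \<noteq> {}"
  then obtain c where c: "c \<in> D (\<phi> [])"
    by blast
  then have "bunch_chain E V [c]"
    using deriv_seq_subset[OF ds top] unfolding bunch_chain_def by auto
  then show False
    using deriv_seq_rank_bound[OF ds rank top, of "[c]"] rank[of "[]" c] c by simp
qed

lemma index_lt_omega1_if_chain_path: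
  fixes \<psi> :: "'a bunch list \<Rightarrow> nat list"
  assumes length: "\<And>s. length (\<psi> s) = length s"
    and take: "\<And>s k. take k (\<psi> s) = \<psi> (take k s)"
    and no_branch: "\<And>f. \<exists>k. map f [0..<k] \<notin> \<psi> ` {s. bunch_chain E V s}"
  shows "index_lt_omega1 E V"
proof -
  define P where "P = \<psi> ` {s. bunch_chain E V s}"
  have "take k t \<in> P" if "t \<in> P" for t k
    using that take unfolding P_def by (auto intro!: imageI bunch_chain_take)
  then have "well_order_on P (kb_rel P)"
    using no_branch unfolding P_def by (rule well_order_on_kb_rel)
  then have "well_order_on (Field (kb_rel P)) (kb_rel P)"
    by (simp add: Field_kb_rel)
  define r where "r = dir_image (kb_rel P) to_nat"
  have "well_order_on (Field r) r"
    unfolding r_def using \<open>well_order_on (Field (kb_rel P)) (kb_rel P)\<close>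
    by (rule Well_order_dir_image) (rule inj_on_subset[OF inj_to_nat], simp)
  then obtain D where ds: "is_deriv_seq E V r D"
    using deriv_seq_exists by blast
  define \<phi> where "\<phi> s = to_nat (\<psi> s)" for s
  have rank: "(\<phi> (s @ [p]), \<phi> s) \<in> r - Id" if chain: "bunch_chain E V (s @ [p])" for s p
  proof -
    have "take (length (\<psi> s)) (\<psi> (s @ [p])) = \<psi> s"
      using take[of "length s" "s @ [p]"] length by simp
    then have "kb_less (\<psi> (s @ [p])) (\<psi> s)"
      using length by (simp add: kb_less_proper_prefix)
    moreover have "\<psi> (s @ [p]) \<in> P" "\<psi> s \<in> P"
      using chain bunch_chain_snoc_iff unfolding P_def by blast+
    ultimately have "(\<psi> (s @ [p]), \<psi> s) \<in> kb_rel P" "\<psi> (s @ [p]) \<noteq> \<psi> s"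
      unfolding kb_rel_def by (auto simp: kb_less_irrefl)
    then show ?thesis
      unfolding r_def \<phi>_def dir_image_def using inj_to_nat by (auto simp: inj_eq)
  qed
  have "bunch_chain E V []"
    unfolding bunch_chain_def by simp
  then have "\<phi> [] \<in> Field r"
    unfolding r_def \<phi>_def dir_image_Field Field_kb_rel P_def by blast
  then have "D (\<phi> []) = {}"
    using deriv_seq_vanishes[OF ds rank] by blast
  then show ?thesis
    unfolding index_lt_omega1_def using ds \<open>\<phi> [] \<in> Field r\<close> by (intro exI[of _ r] exI[of _ D]) blast
qed

section \<open>Coding chains by sequences of natural numbers\<close>

lemma dense_sequence_exists:
  obtains q :: "nat \<Rightarrow> 'a::{metric_space, second_countable_topology}"
  where "\<And>z e. e > 0 \<Longrightarrow> \<exists>j. dist z (q j) < e"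
proof -
  obtain D :: "'a set" where D: "countable D" "\<And>X. open X \<Longrightarrow> X \<noteq> {} \<Longrightarrow> \<exists>d\<in>D. d \<in> X"
    using countable_dense_setE by blast
  have "\<exists>j. dist z (from_nat_into D j) < e" if "e > 0" for z :: 'a and e :: real
  proof -
    obtain d where "d \<in> D" "d \<in> ball z e"
      using D(2)[of "ball z e"] \<open>e > 0\<close> by auto
    moreover obtain j where "from_nat_into D j = d"
      using from_nat_into_surj[OF D(1) \<open>d \<in> D\<close>] by blast
    ultimately show ?thesis
      by auto
  qed
  then show ?thesis
    using that by blast
qed

definition approx_index :: "(nat \<Rightarrow> 'a::metric_space) \<Rightarrow> nat \<Rightarrow> 'a \<Rightarrow> nat" where
  "approx_index q k z = (LEAST j. dist z (q j) < (1/2)^k)"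

lemma dist_approx_index:
  assumes dense: "\<And>z e. e > 0 \<Longrightarrow> \<exists>j. dist z (q j) < e"
  shows "dist z (q (approx_index q k z)) < (1/2)^k"
  unfolding approx_index_def by (rule LeastI_ex) (simp add: dense)

lemma dist_less_if_approx_index_eq:
  assumes dense: "\<And>z e. e > 0 \<Longrightarrow> \<exists>j. dist z (q j) < e"
    and eq: "approx_index q k z = approx_index q k z'"
  shows "dist z z' < 2 * (1/2)^k"
proof -
  have "dist z z' \<le> dist z (q (approx_index q k z)) + dist z' (q (approx_index q k z))"
    by (rule dist_triangle2)
  also have "\<dots> < (1/2)^k + (1/2)^k"
    using dist_approx_index[OF dense, of z k] dist_approx_index[OF dense, of z' k] eq by simp
  finally show ?thesis
    by simp
qed

definition digits :: "(nat \<Rightarrow> 'a::metric_space) \<Rightarrow> 'b set \<Rightarrow> ('b \<Rightarrow> 'a) \<Rightarrow> nat \<Rightarrow> nat list" where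
  "digits q A x k = map (\<lambda>j. approx_index q k (x (from_nat_into A j))) [0..<k]"

lemma Cauchy_if_digits_agree:
  fixes x :: "nat \<Rightarrow> 'b \<Rightarrow> 'a::metric_space"
  assumes dense: "\<And>z e. e > 0 \<Longrightarrow> \<exists>j. dist z (q j) < e"
    and A: "countable A" "a \<in> A"
    and agree: "\<And>k. k \<ge> L \<Longrightarrow> \<exists>N. \<forall>m\<ge>N. \<forall>n\<ge>N. digits q A (x m) k = digits q A (x n) k"
  shows "Cauchy (\<lambda>n. x n a)"
proof (rule metric_CauchyI)
  fix e :: real
  assume "e > 0"
  obtain j where j: "from_nat_into A j = a"
    using from_nat_into_surj[OF A] by blast
  obtain k0 where k0: "(1/2::real)^k0 < e/2"
    using real_arch_pow_inv[of "e/2" "1/2"] \<open>e > 0\<close> by auto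
  define k where "k = k0 + L + Suc j"
  have "j < k"
    unfolding k_def by simp
  have "(1/2::real)^k \<le> (1/2)^k0"
    unfolding k_def by (rule power_decreasing) auto
  then have small: "2 * (1/2::real)^k < e"
    using k0 by linarith
  obtain N where N: "\<And>m n. m \<ge> N \<Longrightarrow> n \<ge> N \<Longrightarrow> digits q A (x m) k = digits q A (x n) k"
    using agree[of k] unfolding k_def by auto
  have "dist (x m a) (x n a) < e" if "m \<ge> N" "n \<ge> N" for m n
  proof -
    have "digits q A (x m) k ! j = digits q A (x n) k ! j"
      using N[OF that] by simp
    then have "approx_index q k (x m a) = approx_index q k (x n a)"
      using j \<open>j < k\<close> unfolding digits_def by simp
    then show ?thesis
      using dist_less_if_approx_index_eq[OF dense] small by (meson order.strict_trans)
  qed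
  then show "\<exists>N. \<forall>m\<ge>N. \<forall>n\<ge>N. dist (x m a) (x n a) < e"
    by blast
qed

lemma countable_EG:
  assumes "countable E" "finite G"
  shows "countable (EG E G)"
proof -
  define extend where "extend g n = (if n \<in> G then g n else 0)" for g :: "nat \<Rightarrow> real" and n
  have "EG E G \<subseteq> extend ` (Pi\<^sub>E G (\<lambda>_. E))"
  proof
    fix f
    assume f: "f \<in> EG E G"
    then have "f = extend (restrict f G)"
      unfolding EG_def extend_def by (auto simp: fun_eq_iff)
    moreover have "restrict f G \<in> Pi\<^sub>E G (\<lambda>_. E)"
      using f unfolding EG_def by auto
    ultimately show "f \<in> extend ` (Pi\<^sub>E G (\<lambda>_. E))"
      by blast
  qed
  moreover have "countable (extend ` (Pi\<^sub>E G (\<lambda>_. E)))"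
    using countable_PiE[OF assms(2), of "\<lambda>_. E"] assms(1) by auto
  ultimately show ?thesis
    by (rule countable_subset)
qed

text \<open>A chain of length \<open>n\<close> is coded with the digits of level \<open>n\<close> of its bunches; as
  \<open>chain_path\<close> records the codes of all prefixes, a branch of the tree determines every
  coordinate of every bunch to every precision.\<close>

definition bunch_code :: "(nat \<Rightarrow> 'a::metric_space) \<Rightarrow> real set \<Rightarrow> nat \<Rightarrow> 'a bunch \<Rightarrow> nat list \<times> nat list" where
  "bunch_code q E k c = (sorted_list_of_set (fst c), digits q (EG E (fst c)) (snd c) k)"

definition chain_code :: "(nat \<Rightarrow> 'a::metric_space) \<Rightarrow> real set \<Rightarrow> 'a bunch list \<Rightarrow> nat" where
  "chain_code q E t = to_nat (map (bunch_code q E (length t)) t)"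

definition chain_path :: "(nat \<Rightarrow> 'a::metric_space) \<Rightarrow> real set \<Rightarrow> 'a bunch list \<Rightarrow> nat list" where
  "chain_path q E s = map (\<lambda>k. chain_code q E (take (Suc k) s)) [0..<length s]"

lemma length_chain_path [simp]: "length (chain_path q E s) = length s"
  unfolding chain_path_def by simp

lemma take_chain_path: "take k (chain_path q E s) = chain_path q E (take k s)"
proof (rule nth_equalityI)
  fix i
  assume "i < length (take k (chain_path q E s))"
  then have "i < k" "i < length s"
    by auto
  then show "take k (chain_path q E s) ! i = chain_path q E (take k s) ! i"
    by (simp add: chain_path_def min_def)
qed simp

lemma bunch_code_eq_if_chain_path_eq:
  assumes eq: "chain_path q E s ! k = chain_path q E t ! k"
    and k: "k < length s" "k < length t" and "i \<le> k"
  shows "bunch_code q E (Suc k) (s ! i) = bunch_code q E (Suc k) (t ! i)"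
proof -
  have "map (bunch_code q E (Suc k)) (take (Suc k) s) = map (bunch_code q E (Suc k)) (take (Suc k) t)"
    using eq k inj_to_nat unfolding chain_path_def chain_code_def by (simp add: inj_eq)
  then have "map (bunch_code q E (Suc k)) (take (Suc k) s) ! i = map (bunch_code q E (Suc k)) (take (Suc k) t) ! i"
    by (rule arg_cong)
  then show ?thesis
    using k \<open>i \<le> k\<close> by simp
qed

lemma vine_closed_limit:
  assumes vine: "is_vine E V" and closed: "vine_closed E V" and G: "finite G"
    and ev: "\<forall>\<^sub>F n in sequentially. (G, x n) \<in> V"
    and lim: "\<And>g. g \<in> EG E G \<Longrightarrow> (\<lambda>n. x n g) \<longlonglongrightarrow> y g"
  shows "(G, restrict y (EG E G)) \<in> V"
proof -
  have "\<forall>\<^sub>F n in sequentially. x n \<in> topspace (product_topology (\<lambda>_. euclidean) (EG E G))"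
    using ev by eventually_elim (use vine in \<open>auto simp: is_vine_def is_bunch_def PiE_def\<close>)
  then have "limitin (product_topology (\<lambda>_. euclidean) (EG E G)) x (restrict y (EG E G)) sequentially"
    unfolding limitin_componentwise using lim by simp
  moreover have "closedin (product_topology (\<lambda>_. euclidean) (EG E G)) {x. (G, x) \<in> V}"
    using closed G unfolding vine_closed_def by blast
  ultimately have "restrict y (EG E G) \<in> {x. (G, x) \<in> V}"
    by (rule limitin_closedin) (use ev in simp_all)
  then show ?thesis
    by simp
qed

lemma limit_of_chains_increasing:
  fixes V :: "('a::t2_space) bunch set"
  assumes vine: "is_vine E V"
    and chain: "\<And>n. bunch_chain E V (s n)" "\<And>n. length (s n) = n"
    and supp: "\<And>i n. i < n \<Longrightarrow> fst (s n ! i) = G i"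
    and lim: "\<And>i g. g \<in> EG E (G i) \<Longrightarrow> (\<lambda>n. snd (s n ! i) g) \<longlonglongrightarrow> y i g"
  shows "bunch_less E (G i, restrict (y i) (EG E (G i))) (G (Suc i), restrict (y (Suc i)) (EG E (G (Suc i))))"
proof -
  have step: "bunch_less E (s n ! i) (s n ! Suc i)" if "Suc i < n" for n
    using chain that unfolding bunch_chain_def by (simp add: successively_nth)
  define a where "a = s (Suc (Suc i)) ! i"
  define b where "b = s (Suc (Suc i)) ! Suc i"
  have ab: "bunch_le E a b" "b \<noteq> a" "fst a = G i" "fst b = G (Suc i)"
    using step[of "Suc (Suc i)"] supp unfolding a_def b_def bunch_less_def by auto
  then have seg: "initial_segment (G i) (G (Suc i))"
    unfolding bunch_le_def by simp
  have "a \<in> V" "b \<in> V"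
    unfolding a_def b_def by (rule bunch_chain_nth_mem[OF chain(1)], simp add: chain(2))+
  then have "is_bunch E a" "is_bunch E b"
    using vine unfolding is_vine_def by blast+
  then have "G i \<noteq> G (Suc i)"
    using bunch_eq_if_le_same_support[of E a b] ab by auto
  moreover have "y (Suc i) g = y i g" if g: "g \<in> EG E (G i)" for g
  proof -
    have "\<forall>\<^sub>F n in sequentially. snd (s n ! Suc i) g = snd (s n ! i) g"
      unfolding eventually_sequentially
    proof (intro exI allI impI)
      fix n
      assume "n \<ge> Suc (Suc i)"
      then show "snd (s n ! Suc i) g = snd (s n ! i) g"
        using step[of n] supp[of i n] g unfolding bunch_less_def bunch_le_def by simp
    qed
    moreover have "g \<in> EG E (G (Suc i))"
      using seg g EG_mono unfolding initial_segment_def by blast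
    ultimately have "(\<lambda>n. snd (s n ! i) g) \<longlonglongrightarrow> y (Suc i) g"
      using lim[of g "Suc i"] by (simp add: tendsto_cong)
    then show ?thesis
      using lim[OF g] by (rule LIMSEQ_unique)
  qed
  moreover have "EG E (G i) \<subseteq> EG E (G (Suc i))"
    using seg EG_mono unfolding initial_segment_def by blast
  ultimately show ?thesis
    using seg unfolding bunch_less_def bunch_le_def by auto
qed

lemma limit_of_chains_in_vine:
  assumes vine: "is_vine E V" and closed: "vine_closed E V"
    and chain: "\<And>n. bunch_chain E V (s n)" "\<And>n. length (s n) = n"
    and supp: "\<And>i n. i < n \<Longrightarrow> fst (s n ! i) = G i"
    and lim: "\<And>i g. g \<in> EG E (G i) \<Longrightarrow> (\<lambda>n. snd (s n ! i) g) \<longlonglongrightarrow> y i g"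
  shows "(G i, restrict (y i) (EG E (G i))) \<in> V"
proof (rule vine_closed_limit[OF vine closed])
  have inV: "s n ! i \<in> V" if "i < n" for n
    by (rule bunch_chain_nth_mem[OF chain(1)]) (simp add: chain(2) that)
  then show "finite (G i)"
    using vine supp[of i "Suc i"] unfolding is_vine_def is_bunch_def by force
  show "\<forall>\<^sub>F n in sequentially. (G i, snd (s n ! i)) \<in> V"
    unfolding eventually_sequentially
  proof (intro exI allI impI)
    fix n
    assume "n \<ge> Suc i"
    then have "s n ! i = (G i, snd (s n ! i))"
      using supp[of i n] by (simp add: prod_eq_iff)
    then show "(G i, snd (s n ! i)) \<in> V"
      using inV \<open>n \<ge> Suc i\<close> by (metis Suc_le_eq)
  qed
qed (rule lim)

lemma bunch_code_along_branch:
  assumes path: "\<And>n. chain_path q E (s n) = map f [0..<n]" and "i \<le> k" "k < m" "k < n"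
  shows "bunch_code q E (Suc k) (s m ! i) = bunch_code q E (Suc k) (s n ! i)"
proof -
  have "length (s n) = n" for n
    using arg_cong[OF path[of n], of length] by simp
  then show ?thesis
    using assms by (intro bunch_code_eq_if_chain_path_eq) simp_all
qed

lemma support_along_branch:
  assumes vine: "is_vine E V" and chain: "\<And>n. bunch_chain E V (s n)"
    and path: "\<And>n. chain_path q E (s n) = map f [0..<n]" and "i < n"
  shows "fst (s n ! i) = fst (s (Suc i) ! i)"
proof -
  have "is_bunch E (s n ! i)" if "i < n" for n
    using vine bunch_chain_nth_mem[OF chain] that arg_cong[OF path[of n], of length]
    unfolding is_vine_def by simp
  then have "finite (fst (s n ! i))" "finite (fst (s (Suc i) ! i))"
    using \<open>i < n\<close> unfolding is_bunch_def by simp_all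
  moreover have "sorted_list_of_set (fst (s n ! i)) = sorted_list_of_set (fst (s (Suc i) ! i))"
    using bunch_code_along_branch[OF path, of i i n "Suc i"] \<open>i < n\<close> unfolding bunch_code_def by simp
  ultimately show ?thesis
    using sorted_list_of_set_inject by blast
qed

lemma Cauchy_along_branch:
  fixes V :: "('a::metric_space) bunch set"
  assumes dense: "\<And>z e. e > 0 \<Longrightarrow> \<exists>j. dist z (q j) < e"
    and E: "countable E" and vine: "is_vine E V" and chain: "\<And>n. bunch_chain E V (s n)"
    and path: "\<And>n. chain_path q E (s n) = map f [0..<n]"
    and g: "g \<in> EG E (fst (s (Suc i) ! i))"
  shows "Cauchy (\<lambda>n. snd (s n ! i) g)"
proof (rule Cauchy_if_digits_agree[OF dense countable_EG[OF E] g])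
  show "finite (fst (s (Suc i) ! i))"
    using vine bunch_chain_nth_mem[OF chain] arg_cong[OF path[of "Suc i"], of length]
    unfolding is_vine_def is_bunch_def by simp
  fix k
  assume "k \<ge> Suc i"
  let ?A = "EG E (fst (s (Suc i) ! i))"
  have "digits q ?A (snd (s m ! i)) k = digits q ?A (snd (s n ! i)) k" if "m \<ge> k" "n \<ge> k" for m n
    using bunch_code_along_branch[OF path, of i "k - 1" m n] \<open>k \<ge> Suc i\<close> that
      support_along_branch[OF vine chain path, of i m] support_along_branch[OF vine chain path, of i n]
    unfolding bunch_code_def by simp
  then show "\<exists>N. \<forall>m\<ge>N. \<forall>n\<ge>N. digits q ?A (snd (s m ! i)) k = digits q ?A (snd (s n ! i)) k"
    by blast
qed

lemma chain_path_no_branch: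
  fixes V :: "('a::polish_space) bunch set" and q :: "nat \<Rightarrow> 'a"
  assumes dense: "\<And>z e. e > 0 \<Longrightarrow> \<exists>j. dist z (q j) < e"
    and E: "countable E" and vine: "is_vine E V" and closed: "vine_closed E V"
    and wfd: "vine_well_founded E V"
  shows "\<exists>k. map f [0..<k] \<notin> chain_path q E ` {s. bunch_chain E V s}"
proof (rule ccontr)
  assume "\<not> ?thesis"
  then have "\<forall>n. \<exists>t. bunch_chain E V t \<and> chain_path q E t = map f [0..<n]"
    by (metis (mono_tags, lifting) imageE mem_Collect_eq)
  then obtain s where chain: "\<And>n. bunch_chain E V (s n)"
    and path: "\<And>n. chain_path q E (s n) = map f [0..<n]"
    by metis
  have len: "length (s n) = n" for n
    using arg_cong[OF path[of n], of length] by simp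
  define G where "G i = fst (s (Suc i) ! i)" for i
  have supp: "fst (s n ! i) = G i" if "i < n" for i n
    unfolding G_def using vine chain path that by (rule support_along_branch)
  have lim: "(\<lambda>n. snd (s n ! i) g) \<longlonglongrightarrow> lim (\<lambda>n. snd (s n ! i) g)" if "g \<in> EG E (G i)" for i g
    using Cauchy_along_branch[OF dense E vine chain path] that Cauchy_convergent convergent_LIMSEQ_iff
    unfolding G_def by blast
  define c where "c i = (G i, restrict (\<lambda>g. lim (\<lambda>n. snd (s n ! i) g)) (EG E (G i)))" for i
  have "c i \<in> V" for i
    unfolding c_def using vine closed chain len supp lim by (rule limit_of_chains_in_vine)
  moreover have "bunch_less E (c i) (c (Suc i))" for i
    unfolding c_def using vine chain len supp lim by (rule limit_of_chains_increasing)
  ultimately show False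
    using increasing_sequence_not_vine_well_founded[OF vine] wfd by blast
qed

theorem proposition3p2:
  fixes E :: "real set" and V :: "('a::polish_space) bunch set"
  assumes "countable E" and "0 \<in> E"
    and "is_vine E V" and "vine_closed E V"
    and "vine_well_founded E V"
  shows "index_lt_omega1 E V"
proof -
  obtain q :: "nat \<Rightarrow> 'a" where dense: "\<And>z e. e > 0 \<Longrightarrow> \<exists>j. dist z (q j) < e"
    using dense_sequence_exists by blast
  show ?thesis
  proof (rule index_lt_omega1_if_chain_path)
    show "length (chain_path q E s) = length s" for s
      by simp
    show "take k (chain_path q E s) = chain_path q E (take k s)" for s k
      by (rule take_chain_path)
    show "\<exists>k. map f [0..<k] \<notin> chain_path q E ` {s. bunch_chain E V s}" for f
      using dense assms(1,3-5) by (rule chain_path_no_branch)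
  qed
qed

end
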